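(* For every component $H$ of $G[\overline{C}]$, we have $|N_H(x_1)|=|N_H(x_2)|=1$.
   Context: All graphs are simple. $\mathcal{G}^*$ denotes the class of graphs in which any two distinct odd cycles share at most one edge. Standing setting: $G\in\mathcal{G}^*$ is $2$-connected, and $C$ is a longest odd cycle of $G$ with $|C|\ge 5$. We also write $C$ for its vertex set. Let $\overline{C}=V(G)\setminus C$, assumed nonempty. For $v\in\overline{C}$ and $w\in C$, $v$ touches $w$ if there is a $v,w$-path meeting $C$ only at $w$. $T(v)=\{w\in C: v \text{ touches } w\}$. In this setting, $T(v)$ is the same set for all $v\in\overline{C}$; this set is $\{x_1,x_2\}$ for two adjacent vertices $x_1,x_2$ of $C$. For $u\in V(G)$, write $N_H(u)=N(u)\cap V(H)$. *)

theory Defs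
  imports Main
begin

definition simple_graph :: "'a set \<Rightarrow> ('a \<Rightarrow> 'a \<Rightarrow> bool) \<Rightarrow> bool" where
  "simple_graph V E \<longleftrightarrow> finite V \<and> (\<forall>u v. E u v \<longrightarrow> E v u) \<and> (\<forall>u. \<not> E u u)
     \<and> (\<forall>u v. E u v \<longrightarrow> u \<in> V \<and> v \<in> V)"

definition is_cycle :: "'a set \<Rightarrow> ('a \<Rightarrow> 'a \<Rightarrow> bool) \<Rightarrow> 'a list \<Rightarrow> bool" where
  "is_cycle V E cs \<longleftrightarrow> length cs \<ge> 3 \<and> distinct cs \<and> set cs \<subseteq> V \<and>
     (\<forall>i < length cs. E (cs ! i) (cs ! ((i + 1) mod length cs)))"

definition cycle_edges :: "'a list \<Rightarrow> 'a set set" where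
  "cycle_edges cs = {{cs ! i, cs ! ((i + 1) mod length cs)} | i. i < length cs}"

definition is_odd_cycle :: "'a set \<Rightarrow> ('a \<Rightarrow> 'a \<Rightarrow> bool) \<Rightarrow> 'a list \<Rightarrow> bool" where
  "is_odd_cycle V E cs \<longleftrightarrow> is_cycle V E cs \<and> odd (length cs)"

text \<open>The class G*: any two distinct odd cycles (as subgraphs, i.e. with different
  edge sets) share at most one edge.\<close>
definition in_Gstar :: "'a set \<Rightarrow> ('a \<Rightarrow> 'a \<Rightarrow> bool) \<Rightarrow> bool" where
  "in_Gstar V E \<longleftrightarrow> (\<forall>c1 c2. is_odd_cycle V E c1 \<and> is_odd_cycle V E c2 \<and>
      cycle_edges c1 \<noteq> cycle_edges c2 \<longrightarrow> card (cycle_edges c1 \<inter> cycle_edges c2) \<le> 1)"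

definition longest_odd_cycle :: "'a set \<Rightarrow> ('a \<Rightarrow> 'a \<Rightarrow> bool) \<Rightarrow> 'a list \<Rightarrow> bool" where
  "longest_odd_cycle V E cs \<longleftrightarrow> is_odd_cycle V E cs \<and>
     (\<forall>c. is_odd_cycle V E c \<longrightarrow> length c \<le> length cs)"

definition is_path :: "'a set \<Rightarrow> ('a \<Rightarrow> 'a \<Rightarrow> bool) \<Rightarrow> 'a list \<Rightarrow> bool" where
  "is_path V E xs \<longleftrightarrow> xs \<noteq> [] \<and> distinct xs \<and> set xs \<subseteq> V \<and>
     (\<forall>i. i + 1 < length xs \<longrightarrow> E (xs ! i) (xs ! (i + 1)))"

definition connected_on :: "('a \<Rightarrow> 'a \<Rightarrow> bool) \<Rightarrow> 'a set \<Rightarrow> bool" where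
  "connected_on E S \<longleftrightarrow> S \<noteq> {} \<and>
     (\<forall>u\<in>S. \<forall>v\<in>S. \<exists>xs. is_path S E xs \<and> hd xs = u \<and> last xs = v)"

definition two_connected :: "'a set \<Rightarrow> ('a \<Rightarrow> 'a \<Rightarrow> bool) \<Rightarrow> bool" where
  "two_connected V E \<longleftrightarrow> card V \<ge> 3 \<and> connected_on E V \<and>
     (\<forall>x\<in>V. connected_on E (V - {x}))"

definition is_component :: "('a \<Rightarrow> 'a \<Rightarrow> bool) \<Rightarrow> 'a set \<Rightarrow> 'a set \<Rightarrow> bool" where
  "is_component E S H \<longleftrightarrow> H \<subseteq> S \<and> connected_on E H \<and>
     (\<forall>H'. H \<subseteq> H' \<and> H' \<subseteq> S \<and> connected_on E H' \<longrightarrow> H' = H)"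

definition touches :: "'a set \<Rightarrow> ('a \<Rightarrow> 'a \<Rightarrow> bool) \<Rightarrow> 'a set \<Rightarrow> 'a \<Rightarrow> 'a \<Rightarrow> bool" where
  "touches V E C v w \<longleftrightarrow> w \<in> C \<and>
     (\<exists>xs. is_path V E xs \<and> hd xs = v \<and> last xs = w \<and> set xs \<inter> C = {w})"

definition touch_set :: "'a set \<Rightarrow> ('a \<Rightarrow> 'a \<Rightarrow> bool) \<Rightarrow> 'a set \<Rightarrow> 'a \<Rightarrow> 'a set" where
  "touch_set V E C v = {w \<in> C. touches V E C v w}"

definition nbhd_in :: "('a \<Rightarrow> 'a \<Rightarrow> bool) \<Rightarrow> 'a set \<Rightarrow> 'a \<Rightarrow> 'a set" where
  "nbhd_in E H u = {y \<in> H. E u y}"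

end

theory Submission
  imports Defs
begin

text \<open>Since G is in G* and x1 x2 is an edge with both ends on the longest odd cycle C, x1 and x2
  are consecutive on C, so C minus this edge is a Hamiltonian x1--x2 path of C. Hence a path outside C
  from a neighbour of x1 to a neighbour of x2 has an odd number of vertices: otherwise it would close an
  odd cycle longer than C. Every component H of G - C is adjacent to x1 (and symmetrically to x2),
  because G - x2 is connected and x1, x2 are the only vertices of C touched from outside. If x1 had two
  neighbours a, b in H, joining each of them through H to a neighbour c of x2 would yield two different
  odd cycles sharing the edges x2 x1 and c x2, contradicting G*.\<close>

lemma is_path_iff:
  "is_path V E xs \<longleftrightarrow> xs \<noteq> [] \<and> distinct xs \<and> set xs \<subseteq> V \<and> successively E xs"
  by (simp add: is_path_def successively_conv_nth)

lemma is_path_mono: "is_path S E xs \<Longrightarrow> S \<subseteq> T \<Longrightarrow> is_path T E xs"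
  by (auto simp: is_path_def)

lemma is_path_rev: "symp E \<Longrightarrow> is_path V E xs \<Longrightarrow> is_path V E (rev xs)"
  by (auto simp: is_path_iff elim: successively_mono dest: sympD)

lemma all_less_conv_last:
  "(n::nat) \<ge> 1 \<Longrightarrow> (\<forall>i < n. P i) \<longleftrightarrow> (\<forall>i. i + 1 < n \<longrightarrow> P i) \<and> P (n - 1)"
  by (metis One_nat_def Suc_eq_plus1 Suc_lessD Suc_lessI diff_Suc_1' diff_less_mono less_Suc_eq)

lemma is_cycle_iff:
  "is_cycle V E cs \<longleftrightarrow> length cs \<ge> 3 \<and> is_path V E cs \<and> E (last cs) (hd cs)"
proof (cases "length cs \<ge> 3")
  case True
  then have "cs \<noteq> []" and "length cs - 1 + 1 = length cs" by auto
  then have "cs ! ((length cs - 1 + 1) mod length cs) = hd cs" "cs ! (length cs - 1) = last cs"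
    by (metis mod_self hd_conv_nth last_conv_nth)+
  then show ?thesis
    using True all_less_conv_last[of "length cs" "\<lambda>i. E (cs ! i) (cs ! ((i + 1) mod length cs))"]
    by (auto simp: is_cycle_def is_path_def)
qed (auto simp: is_cycle_def)

fun path_edges :: "'a list \<Rightarrow> 'a set set" where
  "path_edges [] = {}"
| "path_edges [x] = {}"
| "path_edges (x # y # zs) = insert {x, y} (path_edges (y # zs))"

lemma path_edges_Cons:
  "path_edges (x # xs) = (if xs = [] then {} else insert {x, hd xs} (path_edges xs))"
  by (cases xs) auto

lemma path_edges_append:
  "path_edges (xs @ ys) =
     path_edges xs \<union> path_edges ys \<union> (if xs = [] \<or> ys = [] then {} else {{last xs, hd ys}})"
  by (induction xs rule: path_edges.induct) (auto simp: path_edges_Cons)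

lemma path_edges_subset: "e \<in> path_edges xs \<Longrightarrow> e \<subseteq> set xs"
  by (induction xs rule: path_edges.induct) auto

lemma path_edges_conv_nth: "path_edges xs = (\<lambda>i. {xs ! i, xs ! Suc i}) ` {i. Suc i < length xs}"
proof (induction xs rule: path_edges.induct)
  case (3 x y zs)
  have "{i. Suc i < length (x # y # zs)} = insert 0 (Suc ` {i. Suc i < length (y # zs)})"
    by (auto simp: image_iff less_Suc_eq_0_disj)
  then show ?case using 3 by (simp add: image_image)
qed auto

lemma cycle_edges_conv_path_edges:
  assumes "cs \<noteq> []"
  shows "cycle_edges cs = insert {last cs, hd cs} (path_edges cs)"
proof -
  have "cycle_edges cs = (\<lambda>i. {cs ! i, cs ! ((i + 1) mod length cs)}) ` {..<length cs}"
    by (auto simp: cycle_edges_def)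
  also have "{..<length cs} = insert (length cs - 1) {i. Suc i < length cs}"
    using assms by auto
  finally show ?thesis
    using assms by (auto simp: path_edges_conv_nth last_conv_nth hd_conv_nth insert_commute)
qed

lemma finite_cycle_edges: "finite (cycle_edges cs)"
  by (simp add: cycle_edges_def)

lemma is_cycle_rotate:
  assumes "is_cycle V E (xs @ ys)"
  shows "is_cycle V E (ys @ xs)" and "cycle_edges (ys @ xs) = cycle_edges (xs @ ys)"
proof -
  have "is_cycle V E (ys @ xs) \<and> cycle_edges (ys @ xs) = cycle_edges (xs @ ys)"
  proof (cases "xs = [] \<or> ys = []")
    case False
    then show ?thesis using assms
      by (auto simp: is_cycle_iff is_path_iff successively_append_iff
          cycle_edges_conv_path_edges path_edges_append)
  qed (use assms in auto)
  then show "is_cycle V E (ys @ xs)" "cycle_edges (ys @ xs) = cycle_edges (xs @ ys)" by auto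
qed

lemma successively_leave:
  assumes "successively R xs" "xs \<noteq> []" "hd xs \<in> H" "last xs \<notin> H"
  shows "\<exists>y\<in>H. \<exists>z\<in>set xs - H. R y z"
  using assms by (induction R xs rule: successively.induct) (auto simp: successively_Cons)

lemma connected_on_leave:
  assumes "connected_on E S" "H \<subseteq> S" "h \<in> H" "w \<in> S - H"
  shows "\<exists>y\<in>H. \<exists>z\<in>S - H. E y z"
proof -
  obtain xs where "is_path S E xs" "hd xs = h" "last xs = w"
    using assms unfolding connected_on_def by blast
  then show ?thesis
    using successively_leave[of E xs H] assms(3,4) by (auto simp: is_path_iff)
qed

lemma connected_on_insert:
  assumes "symp E" "connected_on E H" "y \<in> H" "E y z"
  shows "connected_on E (insert z H)"
proof (cases "z \<in> H")
  case False
  have from_z: "\<exists>xs. is_path (insert z H) E xs \<and> hd xs = z \<and> last xs = v"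
    if "v \<in> insert z H" for v
  proof (cases "v = z")
    case True
    then show ?thesis by (intro exI[of _ "[z]"]) (auto simp: is_path_iff)
  next
    case False
    then have "v \<in> H" using that by simp
    then obtain xs where "is_path H E xs" "hd xs = y" "last xs = v"
      using assms(2,3) unfolding connected_on_def by blast
    moreover have "E z y" using assms(1,4) by (rule sympD)
    ultimately show ?thesis
      using \<open>z \<notin> H\<close> by (intro exI[of _ "z # xs"]) (auto simp: is_path_iff successively_Cons)
  qed
  show ?thesis
    unfolding connected_on_def
  proof (intro conjI ballI)
    fix u v assume u: "u \<in> insert z H" and v: "v \<in> insert z H"
    show "\<exists>xs. is_path (insert z H) E xs \<and> hd xs = u \<and> last xs = v"
    proof (cases "u = z")
      case True
      then show ?thesis using from_z[OF v] by simp
    next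
      case u_ne: False
      show ?thesis
      proof (cases "v = z")
        case True
        obtain xs where "is_path (insert z H) E xs" "hd xs = z" "last xs = u"
          using from_z[OF u] by blast
        then show ?thesis
          using True is_path_rev[OF assms(1)] by (intro exI[of _ "rev xs"]) (auto simp: hd_rev last_rev)
      next
        case False
        then have "u \<in> H" "v \<in> H" using u v u_ne by auto
        then obtain xs where "is_path H E xs" "hd xs = u" "last xs = v"
          using assms(2) unfolding connected_on_def by blast
        then show ?thesis using is_path_mono[of H E xs "insert z H"] by blast
      qed
    qed
  qed simp
next
  case True then show ?thesis using assms(2) by (simp add: insert_absorb)
qed

lemma is_component_closed:
  assumes "symp E" "is_component E S H" "y \<in> H" "z \<in> S" "E y z"
  shows "z \<in> H"
proof -
  have "H \<subseteq> S" "connected_on E H" using assms(2) by (auto simp: is_component_def)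
  then have "connected_on E (insert z H)" "insert z H \<subseteq> S"
    using connected_on_insert[OF assms(1) _ assms(3,5)] assms(4) by auto
  then have "insert z H = H"
    using assms(2) unfolding is_component_def by blast
  then show ?thesis by blast
qed

lemma in_Gstar_cycle_edges_eq:
  assumes "in_Gstar V E" "is_odd_cycle V E c1" "is_odd_cycle V E c2"
    and "e1 \<in> cycle_edges c1 \<inter> cycle_edges c2" "e2 \<in> cycle_edges c1 \<inter> cycle_edges c2" "e1 \<noteq> e2"
  shows "cycle_edges c1 = cycle_edges c2"
proof (rule ccontr)
  assume "cycle_edges c1 \<noteq> cycle_edges c2"
  then have "card (cycle_edges c1 \<inter> cycle_edges c2) \<le> 1"
    using assms(1-3) unfolding in_Gstar_def by blast
  moreover have "card {e1, e2} \<le> card (cycle_edges c1 \<inter> cycle_edges c2)"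
    using assms(4,5) by (intro card_mono) (auto simp: finite_cycle_edges)
  ultimately show False using \<open>e1 \<noteq> e2\<close> by simp
qed

lemma closed_path_cycle_edges:
  "p \<noteq> [] \<Longrightarrow> cycle_edges (x # p @ [y]) = insert {y, x} (insert {x, hd p} (insert {last p, y} (path_edges p)))"
  by (auto simp: cycle_edges_conv_path_edges path_edges_append path_edges_Cons)

lemma closed_path_is_cycle:
  "is_path V E (x # p @ [y]) \<Longrightarrow> p \<noteq> [] \<Longrightarrow> E y x \<Longrightarrow> is_cycle V E (x # p @ [y])"
  by (cases p) (auto simp: is_cycle_iff)

lemma in_Gstar_odd_cycle_odd_chord_side:
  assumes "in_Gstar V E" "is_odd_cycle V E (x # A @ y # B)" "E y x"
    and "A \<noteq> []" "B \<noteq> []" "odd (length A)"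
  shows False
proof -
  have "is_path V E (x # A @ y # B)" and dist: "distinct (x # A @ y # B)"
    using assms(2) by (auto simp: is_odd_cycle_def is_cycle_iff is_path_iff)
  then have "is_path V E (x # A @ [y])"
    using \<open>A \<noteq> []\<close> by (auto simp: is_path_iff successively_append_iff successively_Cons)
  then have small: "is_odd_cycle V E (x # A @ [y])"
    using closed_path_is_cycle assms(3-6) by (auto simp: is_odd_cycle_def)
  have outside: "x \<notin> set A" "x \<notin> set B" "y \<notin> set A" "y \<notin> set B" "x \<noteq> y" using dist by auto
  then have "x \<notin> e \<or> y \<notin> e" if "e \<in> path_edges A \<union> path_edges B" for e
    using that path_edges_subset by blast
  then have "{y, x} \<notin> cycle_edges (x # A @ y # B)"
    using assms(4,5) outside
    by (auto simp: cycle_edges_conv_path_edges path_edges_append path_edges_Cons doubleton_eq_iff)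
  moreover have "{x, hd A} \<in> cycle_edges (x # A @ y # B)" "{last A, y} \<in> cycle_edges (x # A @ y # B)"
    using assms(4) by (auto simp: cycle_edges_conv_path_edges path_edges_append path_edges_Cons)
  moreover have "{x, hd A} \<noteq> {last A, y}"
    using outside assms(4) by (auto simp: doubleton_eq_iff)
  ultimately show False
    using in_Gstar_cycle_edges_eq[OF assms(1) small assms(2), of "{x, hd A}" "{last A, y}"] assms(4)
    by (auto simp: closed_path_cycle_edges)
qed

lemma in_Gstar_odd_cycle_chord:
  assumes "in_Gstar V E" "symp E"
    and "is_odd_cycle V E (x # A @ y # B)" "E x y"
  shows "A = [] \<or> B = []"
proof (rule ccontr)
  assume "\<not> (A = [] \<or> B = [])"
  then have ne: "A \<noteq> []" "B \<noteq> []" by auto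
  have "odd (length A) \<or> odd (length B)"
    using assms(3) by (auto simp: is_odd_cycle_def)
  then show False
  proof
    assume "odd (length A)"
    with in_Gstar_odd_cycle_odd_chord_side[OF assms(1,3) sympD[OF assms(2,4)] ne] show False .
  next
    assume "odd (length B)"
    moreover have "is_odd_cycle V E (y # B @ x # A)"
      using assms(3) is_cycle_rotate[of V E "x # A" "y # B"] by (auto simp: is_odd_cycle_def)
    ultimately show False
      using in_Gstar_odd_cycle_odd_chord_side[OF assms(1) _ assms(4) ne(2,1)] by blast
  qed
qed

lemma in_Gstar_odd_cycle_hamiltonian_path:
  assumes "in_Gstar V E" "symp E" "is_odd_cycle V E cs"
    and "x \<in> set cs" "y \<in> set cs" "x \<noteq> y" "E x y"
  obtains Q where "is_path V E Q" "hd Q = x" "last Q = y" "set Q = set cs" "length Q = length cs"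
proof -
  obtain p q where cs: "cs = p @ x # q" using assms(4) by (metis split_list)
  then have "y \<in> set (q @ p)" using assms(5,6) by auto
  then obtain A B where AB: "q @ p = A @ y # B" by (metis split_list)
  have "is_cycle V E (x # q @ p)"
    using assms(3) is_cycle_rotate[of V E p "x # q"] by (simp add: cs is_odd_cycle_def)
  then have cyc: "is_cycle V E (x # A @ y # B)" by (simp add: AB)
  have size: "set (x # A @ y # B) = set cs" "length (x # A @ y # B) = length cs"
    using arg_cong[OF AB, of set] arg_cong[OF AB, of length] by (auto simp: cs)
  have "is_odd_cycle V E (x # A @ y # B)"
    using cyc assms(3) size(2) by (simp add: is_odd_cycle_def)
  then have "A = [] \<or> B = []"
    using in_Gstar_odd_cycle_chord[OF assms(1,2) _ assms(7)] by blast
  then show thesis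
  proof
    assume "B = []"
    then show thesis using that cyc size by (auto simp: is_cycle_iff)
  next
    assume "A = []"
    then have "is_cycle V E ((y # B) @ [x])"
      using cyc is_cycle_rotate[of V E "[x]" "y # B"] by simp
    then have "is_path V E ((y # B) @ [x])" using is_cycle_iff by blast
    then have "is_path V E (rev ((y # B) @ [x]))" by (rule is_path_rev[OF assms(2)])
    then show thesis using that size \<open>A = []\<close> by auto
  qed
qed

lemma longest_odd_cycle_detour_odd:
  assumes "longest_odd_cycle V E cs" "in_Gstar V E" "symp E"
    and "x \<in> set cs" "y \<in> set cs" "x \<noteq> y" "E x y"
    and "is_path V E p" "set p \<inter> set cs = {}" "E x (hd p)" "E y (last p)"
  shows "odd (length p)"
proof (rule ccontr)
  assume even: "\<not> odd (length p)"
  have cs: "is_odd_cycle V E cs" using assms(1) by (simp add: longest_odd_cycle_def)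
  obtain Q where Q: "is_path V E Q" "hd Q = x" "last Q = y" "set Q = set cs" "length Q = length cs"
    using in_Gstar_odd_cycle_hamiltonian_path[OF assms(2,3) cs assms(4-7)] .
  have "is_path V E (Q @ rev p)"
    using Q assms(8,9,11) is_path_rev[OF assms(3,8)]
    by (auto simp: is_path_iff successively_append_iff hd_rev)
  moreover have "E (last (Q @ rev p)) (hd Q)"
    using Q assms(8) sympD[OF assms(3,10)] by (auto simp: last_rev is_path_def)
  moreover have "length Q \<ge> 3" using Q cs by (simp add: is_odd_cycle_def is_cycle_def)
  ultimately have "is_odd_cycle V E (Q @ rev p)"
    using even cs Q(5) Q(1) by (auto simp: is_odd_cycle_def is_cycle_iff is_path_def)
  then have "length (Q @ rev p) \<le> length cs"
    using assms(1) unfolding longest_odd_cycle_def by blast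
  then show False using Q(5) assms(8) by (simp add: is_path_def)
qed

locale touching_edge =
  fixes V :: "'a set" and E :: "'a \<Rightarrow> 'a \<Rightarrow> bool" and cs :: "'a list" and x1 x2 :: 'a
  assumes simple: "simple_graph V E"
    and Gstar: "in_Gstar V E"
    and two_conn: "two_connected V E"
    and longest: "longest_odd_cycle V E cs"
    and x1_cs: "x1 \<in> set cs" and x2_cs: "x2 \<in> set cs" and x1_x2: "x1 \<noteq> x2" "E x1 x2"
    and touch_set_eq: "\<forall>v \<in> V - set cs. touch_set V E (set cs) v = {x1, x2}"
begin

lemma symp: "symp E"
  using simple by (auto simp: simple_graph_def symp_def)

lemma swap: "touching_edge V E cs x2 x1"
  using simple Gstar two_conn longest x1_cs x2_cs x1_x2 touch_set_eq
    sympD[OF symp x1_x2(2)]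
  unfolding touching_edge_def by (auto simp: insert_commute)

lemma set_cs_subset: "set cs \<subseteq> V"
  using longest by (auto simp: longest_odd_cycle_def is_odd_cycle_def is_cycle_def)

lemma cycle_neighbour:
  assumes "y \<in> V - set cs" "z \<in> set cs" "E y z"
  shows "z = x1 \<or> z = x2"
proof -
  have "touches V E (set cs) y z"
    unfolding touches_def using assms set_cs_subset
    by (intro conjI exI[of _ "[y, z]"]) (auto simp: is_path_def)
  then show ?thesis using assms(1,2) touch_set_eq by (auto simp: touch_set_def)
qed

lemma component_adjacent:
  assumes "is_component E (V - set cs) H"
  shows "\<exists>y\<in>H. E x1 y"
proof -
  have H: "H \<subseteq> V - set cs" "connected_on E H"
    using assms by (auto simp: is_component_def)
  then obtain h where "h \<in> H" by (auto simp: connected_on_def)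
  have "\<not> set cs \<subseteq> {x1, x2}"
  proof
    assume "set cs \<subseteq> {x1, x2}"
    then have "card (set cs) \<le> 2" by (metis card_2_iff card_mono finite.emptyI finite.insertI x1_x2(1))
    moreover have "card (set cs) = length cs" "length cs \<ge> 3"
      using longest by (auto simp: longest_odd_cycle_def is_odd_cycle_def is_cycle_def distinct_card)
    ultimately show False by simp
  qed
  then obtain w where w: "w \<in> set cs" "w \<noteq> x1" "w \<noteq> x2" by auto
  have "connected_on E (V - {x2})"
    using two_conn x2_cs set_cs_subset by (auto simp: two_connected_def)
  then obtain y z where yz: "y \<in> H" "z \<in> V - {x2} - H" "E y z"
    using connected_on_leave[of E "V - {x2}" H h w] H \<open>h \<in> H\<close> w set_cs_subset x2_cs by blast
  have "z \<in> set cs"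
    using is_component_closed[OF symp assms yz(1) _ yz(3)] yz(2) by blast
  then have "z = x1" using cycle_neighbour[of y z] yz H(1) by auto
  then show ?thesis using yz sympD[OF symp] by blast
qed

lemma detour_odd_cycle:
  assumes "is_path V E p" "set p \<inter> set cs = {}" "E x1 (hd p)" "E x2 (last p)"
  shows "is_odd_cycle V E (x1 # p @ [x2])"
proof -
  have "odd (length p)"
    using longest_odd_cycle_detour_odd[OF longest Gstar symp x1_cs x2_cs x1_x2 assms] .
  moreover have "is_path V E (x1 # p @ [x2])"
    using assms x1_cs x2_cs x1_x2 set_cs_subset sympD[OF symp assms(4)]
    by (auto simp: is_path_iff successively_append_iff successively_Cons)
  moreover have "p \<noteq> []" using assms(1) by (simp add: is_path_def)
  ultimately show ?thesis
    using closed_path_is_cycle[of V E x1 p x2] sympD[OF symp x1_x2(2)]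
    by (simp add: is_odd_cycle_def)
qed

lemma component_neighbour_unique:
  assumes "is_component E (V - set cs) H"
    and "a \<in> H" "b \<in> H" "E x1 a" "E x1 b"
  shows "a = b"
proof (rule ccontr)
  assume "a \<noteq> b"
  have H: "H \<subseteq> V - set cs" "connected_on E H"
    using assms(1) by (auto simp: is_component_def)
  obtain c where "c \<in> H" "E x2 c"
    using touching_edge.component_adjacent[OF swap assms(1)] by blast
  have cycle: "is_odd_cycle V E (x1 # p @ [x2])"
    "cycle_edges (x1 # p @ [x2]) = insert {x2, x1} (insert {x1, u} (insert {c, x2} (path_edges p)))"
    "x1 \<notin> set p"
    if "is_path H E p" "hd p = u" "last p = c" "E x1 u" for p u
  proof -
    have "is_path V E p" "set p \<inter> set cs = {}" "p \<noteq> []"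
      using that(1) H(1) by (auto simp: is_path_def)
    then show "is_odd_cycle V E (x1 # p @ [x2])" "x1 \<notin> set p"
      "cycle_edges (x1 # p @ [x2]) = insert {x2, x1} (insert {x1, u} (insert {c, x2} (path_edges p)))"
      using detour_odd_cycle \<open>E x2 c\<close> that(2-4) x1_cs closed_path_cycle_edges[of p x1 x2]
      by auto
  qed
  obtain pa where pa: "is_path H E pa" "hd pa = a" "last pa = c"
    using H(2) assms(2) \<open>c \<in> H\<close> unfolding connected_on_def by blast
  obtain pb where pb: "is_path H E pb" "hd pb = b" "last pb = c"
    using H(2) assms(3) \<open>c \<in> H\<close> unfolding connected_on_def by blast
  note A = cycle[OF pa assms(4)] and B = cycle[OF pb assms(5)]
  have "c \<noteq> x1" "a \<noteq> x2" using \<open>c \<in> H\<close> assms(2) H(1) x1_cs x2_cs by auto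
  moreover have "{x1, a} \<notin> path_edges pb" using path_edges_subset B(3) by blast
  ultimately have "{x1, a} \<notin> cycle_edges (x1 # pb @ [x2])"
    unfolding B(2) using \<open>a \<noteq> b\<close> x1_x2 by (auto simp: doubleton_eq_iff)
  moreover have "{x1, a} \<in> cycle_edges (x1 # pa @ [x2])" unfolding A(2) by blast
  moreover have "cycle_edges (x1 # pa @ [x2]) = cycle_edges (x1 # pb @ [x2])"
  proof (rule in_Gstar_cycle_edges_eq[OF Gstar A(1) B(1)])
    show "{c, x2} \<in> cycle_edges (x1 # pa @ [x2]) \<inter> cycle_edges (x1 # pb @ [x2])"
      "{x2, x1} \<in> cycle_edges (x1 # pa @ [x2]) \<inter> cycle_edges (x1 # pb @ [x2])"
      unfolding A(2) B(2) by blast+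
    show "{c, x2} \<noteq> {x2, x1}" using \<open>c \<noteq> x1\<close> by (auto simp: doubleton_eq_iff)
  qed
  ultimately show False by simp
qed

lemma card_nbhd_in_x1:
  assumes "is_component E (V - set cs) H"
  shows "card (nbhd_in E H x1) = 1"
proof -
  obtain a where "a \<in> H" "E x1 a" using component_adjacent[OF assms] by blast
  then have "nbhd_in E H x1 = {a}"
    using component_neighbour_unique[OF assms] by (auto simp: nbhd_in_def)
  then show ?thesis by simp
qed

end

theorem mainTheorem9:
  fixes V :: "'a set" and E :: "'a \<Rightarrow> 'a \<Rightarrow> bool" and cs :: "'a list" and x1 x2 :: 'a
  assumes "simple_graph V E"
    and "in_Gstar V E"
    and "two_connected V E"
    and "longest_odd_cycle V E cs"
    and "length cs \<ge> 5"
    and "V - set cs \<noteq> {}"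
    and "x1 \<in> set cs" and "x2 \<in> set cs" and "x1 \<noteq> x2" and "E x1 x2"
    and "\<forall>v \<in> V - set cs. touch_set V E (set cs) v = {x1, x2}"
  shows "\<forall>H. is_component E (V - set cs) H \<longrightarrow>
           card (nbhd_in E H x1) = 1 \<and> card (nbhd_in E H x2) = 1"
proof -
  interpret touching_edge V E cs x1 x2
    using assms unfolding touching_edge_def by blast
  show ?thesis
    using card_nbhd_in_x1 touching_edge.card_nbhd_in_x1[OF swap] by blast
qed

end
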